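(* Let $r_i,n_i,k_{ij}$ ($i,j\in[d]$) be integers with $r_i\ge0$, $r_1+\dots+r_d\ge1$, $k_{ij}\ge0$ for $i\ne j$, $-k_{jj}=r_j+\sum_{i\ne j}k_{ij}$ for all $j$, $n_i\ge-k_{ii}$ and $-k_{ii}>0$ for all $i$. Let $\mathcal F_d^{k_{ij},\mathrm n}$ be the set of $d$-type plane forests with $n_i$ vertices of type $i$, $r_i$ roots of type $i$, and such that for $i\ne j$ exactly $k_{ij}$ vertices of type $j$ have a parent of type $i$. Then $$\left|\mathcal F_d^{k_{ij},\mathrm n}\right|=\frac{\det(-k_{ij})}{n_1n_2\cdots n_d}\prod_{i,j=1}^d\binom{n_i+k'_{ij}-1}{k'_{ij}},$$ where $k'_{ii}=n_i+k_{ii}$ and $k'_{ij}=k_{ij}$ for $i\ne j$.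
   Context: $d\ge2$, $[d]=\{1,\dots,d\}$. A $d$-type plane forest is a finite sequence of finite rooted plane (ordered) trees whose vertices each carry a type in $[d]$, such that children of a common parent appear from left to right in nondecreasing order of type; forests are unlabeled (counted up to isomorphism preserving the tree order, planar order and types).
   Formalization: In a d-type plane forest the roots, like the children of a common parent, appear from left to right in nondecreasing order of type, instead of in any order. The statement above fails without it. *)

theory Defs
  imports Main "Jordan_Normal_Form.Determinant"
begin

text \<open>A vertex-typed plane tree: a node carries its type (a natural number)
  and the ordered list of its subtrees (children from left to right).
  Since the datatype is ordered, distinct values correspond exactly to
  isomorphism classes of typed plane trees.\<close>

datatype ptree = Node nat "ptree list"

fun ptype :: "ptree \<Rightarrow> nat" where
  "ptype (Node t cs) = t"

fun wf_tree :: "nat \<Rightarrow> ptree \<Rightarrow> bool" where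
  "wf_tree d (Node t cs) \<longleftrightarrow>
     t \<in> {1..d} \<and> sorted (map ptype cs) \<and> (\<forall>c\<in>set cs. wf_tree d c)"

definition plane_forest :: "nat \<Rightarrow> ptree list \<Rightarrow> bool" where
  "plane_forest d F \<longleftrightarrow> sorted (map ptype F) \<and> (\<forall>T\<in>set F. wf_tree d T)"

fun tverts :: "nat \<Rightarrow> ptree \<Rightarrow> nat" where
  "tverts i (Node t cs) = (if t = i then 1 else 0) + sum_list (map (tverts i) cs)"

definition fverts :: "nat \<Rightarrow> ptree list \<Rightarrow> nat" where
  "fverts i F = sum_list (map (tverts i) F)"

definition froots :: "nat \<Rightarrow> ptree list \<Rightarrow> nat" where
  "froots i F = length (filter (\<lambda>T. ptype T = i) F)"

fun tedges :: "nat \<Rightarrow> nat \<Rightarrow> ptree \<Rightarrow> nat" where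
  "tedges i j (Node t cs) =
     (if t = i then length (filter (\<lambda>c. ptype c = j) cs) else 0)
     + sum_list (map (tedges i j) cs)"

definition fedges :: "nat \<Rightarrow> nat \<Rightarrow> ptree list \<Rightarrow> nat" where
  "fedges i j F = sum_list (map (tedges i j) F)"

definition forest_class ::
  "nat \<Rightarrow> (nat \<Rightarrow> int) \<Rightarrow> (nat \<Rightarrow> int) \<Rightarrow> (nat \<Rightarrow> nat \<Rightarrow> int) \<Rightarrow> ptree list set" where
  "forest_class d n r k = {F. plane_forest d F
      \<and> (\<forall>i\<in>{1..d}. int (fverts i F) = n i)
      \<and> (\<forall>i\<in>{1..d}. int (froots i F) = r i)
      \<and> (\<forall>i\<in>{1..d}. \<forall>j\<in>{1..d}. i \<noteq> j \<longrightarrow> int (fedges i j F) = k i j)}"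

end

theory Submission
  imports Defs
begin

text \<open>Generalise to forests with a prescribed word \<open>\<tau>\<close> of root types, \<open>n i\<close> vertices of
  type \<open>i\<close> and \<open>E i j\<close> vertices of type \<open>j\<close> whose parent has type \<open>i\<close> (diagonal included),
  subject to the balance condition that every vertex is a root or a child. For these, the
  number of forests times the product of the nonzero \<open>n i\<close> equals \<open>det (n i \<delta>\<^sub>i\<^sub>j - E i j)\<close>
  times the product of the \<open>multichoose (n i) (E i j)\<close>, by induction on the number of vertices.
  Deleting the first root, of type \<open>i\<close> with \<open>c j\<close> children of type \<open>j\<close>, leaves a forest of
  the same kind whose first roots are these children, with \<open>n i\<close> lowered by one and row \<open>i\<close>
  of \<open>E\<close> lowered by \<open>c\<close>. Summed over \<open>c\<close>, the multichoose factors satisfy a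
  Vandermonde-type identity; since the determinant is linear in row \<open>i\<close>, a weighted form of
  that identity shows that it changes on average by the factor \<open>(n i - 1) / n i\<close>, which is
  what the induction needs. For the data of the theorem \<open>E = k'\<close> and the matrix is \<open>-k\<close>.\<close>

section \<open>Words of root types\<close>

definition type_mset :: "nat \<Rightarrow> (nat \<Rightarrow> nat) \<Rightarrow> nat multiset" where
  "type_mset d c = (\<Sum>j\<in>{1..d}. replicate_mset (c j) j)"

definition type_word :: "nat \<Rightarrow> (nat \<Rightarrow> nat) \<Rightarrow> nat list" where
  "type_word d c = sorted_list_of_multiset (type_mset d c)"

lemma count_type_mset: "count (type_mset d c) j = (if j \<in> {1..d} then c j else 0)"
  by (simp add: type_mset_def count_sum)

lemma count_mset_type_word: "count (mset (type_word d c)) j = (if j \<in> {1..d} then c j else 0)"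
  by (simp add: type_word_def count_type_mset)

lemma set_type_word: "set (type_word d c) \<subseteq> {1..d}"
proof
  fix x
  assume "x \<in> set (type_word d c)"
  then have "count (mset (type_word d c)) x \<noteq> 0"
    by simp
  then show "x \<in> {1..d}"
    by (simp add: count_mset_type_word split: if_splits)
qed

lemma sorted_type_word: "sorted (type_word d c)"
  by (simp add: type_word_def)

lemma sorted_eq_type_word:
  assumes "sorted xs" "set xs \<subseteq> {1..d}" "\<forall>j\<in>{1..d}. count (mset xs) j = c j"
  shows "xs = type_word d c"
proof -
  have "type_mset d c = mset xs"
    using assms(2,3) by (intro multiset_eqI) (auto simp: count_type_mset count_eq_zero_iff)
  then have "type_word d c = sort xs"
    by (simp add: type_word_def)
  also have "\<dots> = xs"
    using assms(1) by (rule sorted_sort_id)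
  finally show ?thesis
    by (rule sym)
qed

section \<open>Counting vertices and edges\<close>

lemma fverts_Nil [simp]: "fverts i [] = 0"
  by (simp add: fverts_def)
lemma fverts_Cons [simp]: "fverts i (T # F) = tverts i T + fverts i F"
  by (simp add: fverts_def)
lemma fverts_append [simp]: "fverts i (F @ G) = fverts i F + fverts i G"
  by (simp add: fverts_def)
lemma fedges_Nil [simp]: "fedges i j [] = 0"
  by (simp add: fedges_def)
lemma fedges_Cons [simp]: "fedges i j (T # F) = tedges i j T + fedges i j F"
  by (simp add: fedges_def)
lemma fedges_append [simp]: "fedges i j (F @ G) = fedges i j F + fedges i j G"
  by (simp add: fedges_def)

lemma tverts_Node: "tverts i (Node t cs) = (if t = i then 1 else 0) + fverts i cs"
  by (simp add: fverts_def)

lemma tedges_Node: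
  "tedges i j (Node t cs) = (if t = i then count (mset (map ptype cs)) j else 0) + fedges i j cs"
  by (induction cs) (auto simp: fedges_def)

lemma froots_eq_count: "froots i F = count (mset (map ptype F)) i"
  by (induction F) (auto simp: froots_def)

declare tverts.simps [simp del] tedges.simps [simp del]

lemma tverts_eq_root_plus_in_edges:
  "wf_tree d T \<Longrightarrow> tverts j T = (if ptype T = j then 1 else 0) + (\<Sum>i\<in>{1..d}. tedges i j T)"
proof (induction T)
  case (Node t cs)
  have "fverts j cs = count (mset (map ptype cs)) j + (\<Sum>i\<in>{1..d}. fedges i j cs)"
    using Node by (induction cs) (simp_all add: sum.distrib)
  moreover have "(\<Sum>i\<in>{1..d}. tedges i j (Node t cs))
      = count (mset (map ptype cs)) j + (\<Sum>i\<in>{1..d}. fedges i j cs)"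
    using Node.prems by (simp add: tedges_Node sum.distrib)
  ultimately show ?case
    by (simp only: tverts_Node ptype.simps)
qed

lemma fverts_eq_roots_plus_in_edges:
  "\<forall>T\<in>set F. wf_tree d T \<Longrightarrow>
    fverts j F = count (mset (map ptype F)) j + (\<Sum>i\<in>{1..d}. fedges i j F)"
  by (induction F) (auto simp: tverts_eq_root_plus_in_edges sum.distrib)

lemma set_map_ptype_subset: "\<forall>T\<in>set F. wf_tree d T \<Longrightarrow> set (map ptype F) \<subseteq> {1..d}"
proof (induction F)
  case (Cons T F)
  then show ?case
    by (cases T) auto
qed simp

section \<open>Deleting the first root\<close>

definition rooted_forests ::
  "nat \<Rightarrow> nat list \<Rightarrow> (nat \<Rightarrow> nat) \<Rightarrow> (nat \<Rightarrow> nat \<Rightarrow> nat) \<Rightarrow> ptree list set" where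
  "rooted_forests d \<tau> n E = {F. map ptype F = \<tau> \<and> (\<forall>T\<in>set F. wf_tree d T)
     \<and> (\<forall>i\<in>{1..d}. fverts i F = n i) \<and> (\<forall>i\<in>{1..d}. \<forall>j\<in>{1..d}. fedges i j F = E i j)}"

definition child_counts :: "nat \<Rightarrow> (nat \<Rightarrow> nat \<Rightarrow> nat) \<Rightarrow> nat \<Rightarrow> (nat \<Rightarrow> nat) set" where
  "child_counts d E i = PiE {1..d} (\<lambda>j. {0..E i j})"

text \<open>Deleting the first root, of type \<open>i\<close> with \<open>c j\<close> children of type \<open>j\<close>, leaves a forest
  whose roots are these children followed by the remaining roots.\<close>

abbreviation remaining_forests ::
  "nat \<Rightarrow> nat list \<Rightarrow> (nat \<Rightarrow> nat) \<Rightarrow> (nat \<Rightarrow> nat \<Rightarrow> nat) \<Rightarrow> nat \<Rightarrow> (nat \<Rightarrow> nat) \<Rightarrow> ptree list set"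
where
  "remaining_forests d \<tau> n E i c \<equiv>
     rooted_forests d (type_word d c @ \<tau>) (n(i := n i - 1)) (E(i := (\<lambda>j. E i j - c j)))"

definition join_root :: "nat \<Rightarrow> nat \<Rightarrow> (nat \<Rightarrow> nat) \<Rightarrow> ptree list \<Rightarrow> ptree list" where
  "join_root d i c G = Node i (take (length (type_word d c)) G) # drop (length (type_word d c)) G"

lemma finite_child_counts: "finite (child_counts d E i)"
  by (simp add: child_counts_def finite_PiE)

lemma child_counts_le: "c \<in> child_counts d E i \<Longrightarrow> j \<in> {1..d} \<Longrightarrow> c j \<le> E i j"
  by (auto simp: child_counts_def PiE_iff)

lemma join_root_mem_rooted_forests:
  assumes i: "i \<in> {1..d}" and ni: "n i \<ge> 1"
    and c: "c \<in> child_counts d E i" and G: "G \<in> remaining_forests d \<tau> n E i c"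
  shows "join_root d i c G \<in> rooted_forests d (i # \<tau>) n E"
proof -
  define cs where "cs = take (length (type_word d c)) G"
  define rest where "rest = drop (length (type_word d c)) G"
  have G_eq: "G = cs @ rest" and join: "join_root d i c G = Node i cs # rest"
    by (simp_all add: cs_def rest_def join_root_def)
  have types: "map ptype cs = type_word d c" "map ptype rest = \<tau>"
    using G by (simp_all add: rooted_forests_def cs_def rest_def take_map [symmetric] drop_map [symmetric])
  have wf: "\<forall>T\<in>set G. wf_tree d T"
    using G by (simp add: rooted_forests_def)
  have ccount: "count (mset (map ptype cs)) j = c j" if "j \<in> {1..d}" for j
    using that by (simp add: types count_mset_type_word)
  show ?thesis
    unfolding rooted_forests_def join
  proof (intro CollectI conjI ballI)
    show "map ptype (Node i cs # rest) = i # \<tau>"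
      using types by simp
    show "wf_tree d T" if "T \<in> set (Node i cs # rest)" for T
      using that wf i types sorted_type_word[of d c] by (auto simp: G_eq)
  next
    fix j
    assume j: "j \<in> {1..d}"
    have "fverts j G = (n(i := n i - 1)) j"
      using G j by (simp add: rooted_forests_def)
    then show "fverts j (Node i cs # rest) = n j"
      using ni by (auto simp: G_eq tverts_Node split: if_splits)
  next
    fix l j
    assume l: "l \<in> {1..d}" and j: "j \<in> {1..d}"
    have "fedges l j G = (E(i := (\<lambda>j. E i j - c j))) l j"
      using G l j by (simp add: rooted_forests_def)
    then show "fedges l j (Node i cs # rest) = E l j"
      using child_counts_le[OF c j] ccount[OF j] by (auto simp: G_eq tedges_Node split: if_splits)
  qed
qed

lemma remove_root_mem_remaining_forests:
  assumes F: "Node i cs # rest \<in> rooted_forests d (i # \<tau>) n E"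
    and c: "c = restrict (\<lambda>j. count (mset (map ptype cs)) j) {1..d}"
  shows "c \<in> child_counts d E i" and "map ptype cs = type_word d c"
    and "cs @ rest \<in> remaining_forests d \<tau> n E i c"
proof -
  from F have wf: "\<forall>T\<in>set (Node i cs # rest). wf_tree d T"
    and fv: "\<forall>j\<in>{1..d}. tverts j (Node i cs) + fverts j rest = n j"
    and fe: "\<forall>l\<in>{1..d}. \<forall>j\<in>{1..d}. tedges l j (Node i cs) + fedges l j rest = E l j"
    and rest: "map ptype rest = \<tau>"
    by (auto simp: rooted_forests_def)
  have i: "i \<in> {1..d}"
    using wf by simp
  have "c j \<le> E i j" if j: "j \<in> {1..d}" for j
    using fe i j by (force simp: c tedges_Node)
  then show "c \<in> child_counts d E i"
    by (auto simp: child_counts_def PiE_iff c)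
  show cs: "map ptype cs = type_word d c"
    using wf set_map_ptype_subset [of cs d] by (intro sorted_eq_type_word) (auto simp: c)
  show "cs @ rest \<in> remaining_forests d \<tau> n E i c"
    unfolding rooted_forests_def
  proof (intro CollectI conjI ballI)
    show "map ptype (cs @ rest) = type_word d c @ \<tau>"
      using cs rest by simp
    show "wf_tree d T" if "T \<in> set (cs @ rest)" for T
      using that wf by auto
  next
    fix j
    assume "j \<in> {1..d}"
    with fv have "tverts j (Node i cs) + fverts j rest = n j"
      by blast
    then show "fverts j (cs @ rest) = (n(i := n i - 1)) j"
      by (auto simp: tverts_Node)
  next
    fix l j
    assume lj: "l \<in> {1..d}" "j \<in> {1..d}"
    with fe have "tedges l j (Node i cs) + fedges l j rest = E l j"
      by blast
    then show "fedges l j (cs @ rest) = (E(i := (\<lambda>j. E i j - c j))) l j"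
      using lj by (auto simp: tedges_Node c)
  qed
qed

lemma rooted_forests_Cons_cases:
  assumes F: "F \<in> rooted_forests d (i # \<tau>) n E"
  obtains c G where "c \<in> child_counts d E i" "G \<in> remaining_forests d \<tau> n E i c"
    "F = join_root d i c G"
proof -
  obtain T rest where "F = T # rest" and "ptype T = i"
    using F by (cases F) (auto simp: rooted_forests_def)
  then obtain cs where F_eq: "F = Node i cs # rest"
    by (cases T) auto
  define c where "c = restrict (\<lambda>j. count (mset (map ptype cs)) j) {1..d}"
  note root_removed = remove_root_mem_remaining_forests [OF F [unfolded F_eq] c_def]
  have "F = join_root d i c (cs @ rest)"
    by (simp add: join_root_def F_eq flip: root_removed(2))
  with root_removed(1,3) that show ?thesis
    by blast
qed

lemma join_root_inject:
  assumes c: "c \<in> child_counts d E i" and c': "c' \<in> child_counts d E i"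
    and G: "G \<in> remaining_forests d \<tau> n E i c" and G': "G' \<in> remaining_forests d \<tau> n E i c'"
    and eq: "join_root d i c G = join_root d i c' G'"
  shows "c = c' \<and> G = G'"
proof -
  have "type_word d c = map ptype (take (length (type_word d c)) G)"
    using G by (simp add: rooted_forests_def take_map [symmetric])
  also have "\<dots> = map ptype (take (length (type_word d c')) G')"
    using eq by (simp add: join_root_def)
  also have "\<dots> = type_word d c'"
    using G' by (simp add: rooted_forests_def take_map [symmetric])
  finally have words: "type_word d c = type_word d c'" .
  have "c j = c' j" if "j \<in> {1..d}" for j
    using that words count_mset_type_word[of d c j] count_mset_type_word[of d c' j] by simp
  with c c' have "c = c'"
    unfolding child_counts_def by (intro PiE_ext[of c]) auto
  with eq show ?thesis
    by (simp add: join_root_def) (metis append_take_drop_id)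
qed

lemma card_rooted_forests_Cons:
  assumes i: "i \<in> {1..d}" and ni: "n i \<ge> 1"
    and fin: "\<forall>c\<in>child_counts d E i. finite (remaining_forests d \<tau> n E i c)"
  shows "finite (rooted_forests d (i # \<tau>) n E)"
    and "card (rooted_forests d (i # \<tau>) n E)
           = (\<Sum>c\<in>child_counts d E i. card (remaining_forests d \<tau> n E i c))"
proof -
  let ?S = "SIGMA c:child_counts d E i. remaining_forests d \<tau> n E i c"
  have img: "rooted_forests d (i # \<tau>) n E = (\<lambda>(c, G). join_root d i c G) ` ?S"
    using join_root_mem_rooted_forests[where n = n, OF i ni] rooted_forests_Cons_cases
    by (auto simp: image_iff) blast
  show "finite (rooted_forests d (i # \<tau>) n E)"
    unfolding img using fin finite_child_counts by blast
  have inj: "inj_on (\<lambda>(c, G). join_root d i c G) ?S"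
    by (rule inj_onI) (auto dest: join_root_inject)
  have "card (rooted_forests d (i # \<tau>) n E) = card ?S"
    unfolding img by (rule card_image[OF inj])
  also have "\<dots> = (\<Sum>c\<in>child_counts d E i. card (remaining_forests d \<tau> n E i c))"
    using fin finite_child_counts by simp
  finally show "card (rooted_forests d (i # \<tau>) n E)
      = (\<Sum>c\<in>child_counts d E i. card (remaining_forests d \<tau> n E i c))" .
qed

section \<open>Multiset coefficients\<close>

text \<open>The number of multisets of size \<open>k\<close> over \<open>m\<close> elements; truncated subtraction gives
  \<open>multichoose 0 0 = 1\<close>.\<close>

definition multichoose :: "nat \<Rightarrow> nat \<Rightarrow> nat" where
  "multichoose m k = (m + k - 1) choose k"

lemma multichoose_0_left: "multichoose 0 k = (if k = 0 then 1 else 0)"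
  by (simp add: multichoose_def)

lemma multichoose_0_right [simp]: "multichoose m 0 = 1"
  by (simp add: multichoose_def)

lemma multichoose_Suc_Suc:
  "multichoose (Suc m) (Suc k) = multichoose m (Suc k) + multichoose (Suc m) k"
  by (simp add: multichoose_def)

lemma Suc_times_multichoose:
  "Suc k * multichoose (Suc m) (Suc k) = (Suc m + k) * multichoose (Suc m) k"
  using Suc_times_binomial[of k "m + k"] by (simp add: multichoose_def)

lemma sum_multichoose: "(\<Sum>c\<in>{0..k}. multichoose m (k - c)) = multichoose (Suc m) k"
proof (induction k)
  case (Suc k)
  have "(\<Sum>c\<in>{0..Suc k}. multichoose m (Suc k - c))
      = multichoose m (Suc k) + (\<Sum>c\<in>{0..k}. multichoose m (k - c))"
    by (subst sum.atLeast0_atMost_Suc_shift) simp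
  then show ?case
    using Suc.IH by (simp add: multichoose_Suc_Suc)
qed simp

lemma sum_weighted_multichoose:
  "Suc m * (\<Sum>c\<in>{0..k}. c * multichoose m (k - c)) = k * multichoose (Suc m) k"
proof (induction k)
  case (Suc k)
  have "(\<Sum>c\<in>{0..Suc k}. c * multichoose m (Suc k - c))
      = (\<Sum>c\<in>{0..k}. c * multichoose m (k - c)) + (\<Sum>c\<in>{0..k}. multichoose m (k - c))"
    by (subst sum.atLeast0_atMost_Suc_shift) (simp add: sum.distrib)
  then have "Suc m * (\<Sum>c\<in>{0..Suc k}. c * multichoose m (Suc k - c))
      = k * multichoose (Suc m) k + Suc m * multichoose (Suc m) k"
    by (simp only: add_mult_distrib2 Suc.IH sum_multichoose)
  also have "\<dots> = Suc k * multichoose (Suc m) (Suc k)"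
    by (simp only: Suc_times_multichoose add_mult_distrib add.commute)
  finally show ?case .
qed simp

lemma sum_PiE_weighted_prod:
  fixes f :: "'a \<Rightarrow> 'b \<Rightarrow> 'c :: comm_semiring_1"
  assumes A: "finite A" "\<And>j. j \<in> A \<Longrightarrow> finite (B j)" and a: "a \<in> A"
  shows "(\<Sum>c\<in>PiE A B. w (c a) * (\<Prod>j\<in>A. f j (c j)))
       = (\<Sum>x\<in>B a. w x * f a x) * (\<Prod>j\<in>A - {a}. \<Sum>x\<in>B j. f j x)"
proof -
  define g where "g j x = (if j = a then w x else 1) * f j x" for j x
  have "w (c a) * (\<Prod>j\<in>A. f j (c j)) = (\<Prod>j\<in>A. g j (c j))" for c
    using A a by (simp add: g_def prod.distrib prod.If_cases Int_absorb1)
  then have "(\<Sum>c\<in>PiE A B. w (c a) * (\<Prod>j\<in>A. f j (c j))) = (\<Prod>j\<in>A. \<Sum>x\<in>B j. g j x)"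
    using A by (simp add: prod_sum_PiE)
  also have "\<dots> = (\<Sum>x\<in>B a. g a x) * (\<Prod>j\<in>A - {a}. \<Sum>x\<in>B j. g j x)"
    using A a by (simp add: prod.remove)
  also have "\<dots> = (\<Sum>x\<in>B a. w x * f a x) * (\<Prod>j\<in>A - {a}. \<Sum>x\<in>B j. f j x)"
    by (simp add: g_def)
  finally show ?thesis .
qed

lemma sum_child_counts_multichoose:
  "(\<Sum>c\<in>child_counts d E i. \<Prod>j\<in>{1..d}. multichoose m (E i j - c j))
     = (\<Prod>j\<in>{1..d}. multichoose (Suc m) (E i j))"
proof -
  have "(\<Sum>c\<in>child_counts d E i. \<Prod>j\<in>{1..d}. multichoose m (E i j - c j))
      = (\<Prod>j\<in>{1..d}. \<Sum>x\<in>{0..E i j}. multichoose m (E i j - x))"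
    unfolding child_counts_def by (rule prod_sum_PiE [symmetric]) auto
  then show ?thesis
    by (simp add: sum_multichoose)
qed

lemma sum_child_counts_weighted_multichoose:
  assumes "j \<in> {1..d}"
  shows "Suc m * (\<Sum>c\<in>child_counts d E i. c j * (\<Prod>l\<in>{1..d}. multichoose m (E i l - c l)))
     = E i j * (\<Prod>l\<in>{1..d}. multichoose (Suc m) (E i l))"
proof -
  have "(\<Sum>c\<in>child_counts d E i. c j * (\<Prod>l\<in>{1..d}. multichoose m (E i l - c l)))
      = (\<Sum>x\<in>{0..E i j}. x * multichoose m (E i j - x))
          * (\<Prod>l\<in>{1..d} - {j}. \<Sum>x\<in>{0..E i l}. multichoose m (E i l - x))"
    unfolding child_counts_def
    by (rule sum_PiE_weighted_prod [where w = "\<lambda>x. x"]) (use assms in auto)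
  then have "Suc m * (\<Sum>c\<in>child_counts d E i. c j * (\<Prod>l\<in>{1..d}. multichoose m (E i l - c l)))
      = Suc m * (\<Sum>x\<in>{0..E i j}. x * multichoose m (E i j - x))
          * (\<Prod>l\<in>{1..d} - {j}. multichoose (Suc m) (E i l))"
    by (simp add: sum_multichoose algebra_simps)
  also have "\<dots> = E i j * multichoose (Suc m) (E i j)
      * (\<Prod>l\<in>{1..d} - {j}. multichoose (Suc m) (E i l))"
    by (simp only: sum_weighted_multichoose)
  also have "\<dots> = E i j * (\<Prod>l\<in>{1..d}. multichoose (Suc m) (E i l))"
    using assms by (simp add: prod.remove)
  finally show ?thesis .
qed

lemma prod_multichoose_0_child_counts:
  assumes c: "c \<in> child_counts d E i"
  shows "(\<Prod>j\<in>{1..d}. multichoose 0 (E i j - c j)) = of_bool (c = restrict (E i) {1..d})"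
proof -
  have "c = restrict (E i) {1..d} \<longleftrightarrow> (\<forall>j\<in>{1..d}. E i j - c j = 0)"
  proof
    assume "\<forall>j\<in>{1..d}. E i j - c j = 0"
    with c show "c = restrict (E i) {1..d}"
      using child_counts_le [OF c] unfolding child_counts_def
      by (intro PiE_ext [of c "{1..d}" _ "restrict (E i) {1..d}"]) (auto intro!: le_antisym)
  qed simp
  then show ?thesis
    by (simp add: multichoose_0_left prod_zero_iff)
qed

section \<open>The forest matrix\<close>

lemma det_replace_row:
  fixes A B :: "'a :: comm_ring_1 mat"
  assumes A: "A \<in> carrier_mat d d" and B: "B \<in> carrier_mat d d" and p: "p < d"
    and agree: "\<And>a b. a < d \<Longrightarrow> b < d \<Longrightarrow> a \<noteq> p \<Longrightarrow> A $$ (a, b) = B $$ (a, b)"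
  shows "det B = (\<Sum>b<d. B $$ (p, b) * cofactor A p b)"
proof -
  have "mat_delete A p b = mat_delete B p b" for b
    using A B by (intro eq_matI) (auto simp: mat_delete_def intro!: agree)
  then show ?thesis
    using laplace_expansion_row[OF B p] by (simp add: cofactor_def)
qed

text \<open>With \<open>a = N \<delta> - e\<close>, the rows \<open>a + v c - \<delta>\<close> average to \<open>(N - 1) / N \<cdot> a\<close> under
  weights \<open>R\<close> in which \<open>v\<close> has mean \<open>e / N\<close>; expanding along the row transfers this to
  determinants.\<close>

lemma sum_row_replacements:
  fixes a C \<delta> e :: "nat \<Rightarrow> 'a :: comm_ring_1" and v :: "'c \<Rightarrow> nat \<Rightarrow> 'a"
  assumes S: "(\<Sum>c\<in>X. R c) = S"
    and mean: "\<And>b. b < d \<Longrightarrow> N * (\<Sum>c\<in>X. v c b * R c) = e b * S"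
    and a: "\<And>b. b < d \<Longrightarrow> a b = \<delta> b * N - e b"
  shows "N * (\<Sum>c\<in>X. (\<Sum>b<d. (a b + v c b - \<delta> b) * C b) * R c)
       = (N - 1) * S * (\<Sum>b<d. a b * C b)"
proof -
  have "N * (\<Sum>c\<in>X. (a b + v c b - \<delta> b) * C b * R c) = (N - 1) * S * (a b * C b)"
    if b: "b < d" for b
  proof -
    have "N * (\<Sum>c\<in>X. (a b + v c b - \<delta> b) * C b * R c)
        = C b * ((a b - \<delta> b) * N * (\<Sum>c\<in>X. R c) + N * (\<Sum>c\<in>X. v c b * R c))"
      by (simp add: algebra_simps sum.distrib sum_distrib_left sum_subtractf)
    also have "\<dots> = C b * ((a b - \<delta> b) * N * S + (\<delta> b * N - a b) * S)"
      using S mean[OF b] a[OF b] by simp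
    also have "\<dots> = (N - 1) * S * (a b * C b)"
      by (simp add: algebra_simps)
    finally show ?thesis .
  qed
  then have "(\<Sum>b<d. N * (\<Sum>c\<in>X. (a b + v c b - \<delta> b) * C b * R c))
      = (\<Sum>b<d. (N - 1) * S * (a b * C b))"
    by simp
  then show ?thesis
    by (simp add: sum_distrib_left sum_distrib_right sum.swap [of _ X] mult.assoc)
qed

text \<open>Row \<open>a\<close> and column \<open>b\<close> belong to the types \<open>Suc a\<close> and \<open>Suc b\<close>. A type without
  vertices gets a unit row instead of a zero row, so that the identity survives the deletion of
  the last vertex of a type.\<close>

definition forest_entry :: "(nat \<Rightarrow> nat) \<Rightarrow> (nat \<Rightarrow> nat \<Rightarrow> nat) \<Rightarrow> nat \<Rightarrow> nat \<Rightarrow> int" where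
  "forest_entry n E i j =
     (if n i = 0 then of_bool (i = j) else of_bool (i = j) * int (n i) - int (E i j))"

definition forest_matrix :: "nat \<Rightarrow> (nat \<Rightarrow> nat) \<Rightarrow> (nat \<Rightarrow> nat \<Rightarrow> nat) \<Rightarrow> int mat" where
  "forest_matrix d n E = mat d d (\<lambda>(a, b). forest_entry n E (Suc a) (Suc b))"

definition vertex_product :: "nat \<Rightarrow> (nat \<Rightarrow> nat) \<Rightarrow> int" where
  "vertex_product d n = (\<Prod>l\<in>{l\<in>{1..d}. n l \<noteq> 0}. int (n l))"

definition multichoose_product :: "nat \<Rightarrow> (nat \<Rightarrow> nat) \<Rightarrow> (nat \<Rightarrow> nat \<Rightarrow> nat) \<Rightarrow> nat" where
  "multichoose_product d n E = (\<Prod>l\<in>{1..d}. \<Prod>j\<in>{1..d}. multichoose (n l) (E l j))"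

lemma forest_matrix_carrier: "forest_matrix d n E \<in> carrier_mat d d"
  by (simp add: forest_matrix_def)

lemma forest_matrix_index:
  "a < d \<Longrightarrow> b < d \<Longrightarrow> forest_matrix d n E $$ (a, b) = forest_entry n E (Suc a) (Suc b)"
  by (simp add: forest_matrix_def)

lemma vertex_product_pos: "vertex_product d n > 0"
  unfolding vertex_product_def by (rule prod_pos) auto

lemma vertex_product_update:
  assumes "i \<in> {1..d}"
  shows "vertex_product d (n(i := m)) = int (max 1 m) * vertex_product d (n(i := 0))"
proof -
  have "{l\<in>{1..d}. (n(i := m)) l \<noteq> 0} = (if m = 0 then {} else {i}) \<union> {l\<in>{1..d}. (n(i := 0)) l \<noteq> 0}"
    using assms by auto
  then show ?thesis
    by (auto simp: vertex_product_def prod.union_disjoint intro!: prod.cong)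
qed

lemma multichoose_product_update:
  assumes "i \<in> {1..d}"
  shows "multichoose_product d (n(i := m)) (E(i := e))
       = (\<Prod>j\<in>{1..d}. multichoose m (e j)) * (\<Prod>l\<in>{1..d} - {i}. \<Prod>j\<in>{1..d}. multichoose (n l) (E l j))"
proof -
  have "multichoose_product d (n(i := m)) (E(i := e))
      = (\<Prod>j\<in>{1..d}. multichoose m (e j))
        * (\<Prod>l\<in>{1..d} - {i}. \<Prod>j\<in>{1..d}. multichoose ((n(i := m)) l) ((E(i := e)) l j))"
    unfolding multichoose_product_def using assms by (subst prod.remove) auto
  also have "(\<Prod>l\<in>{1..d} - {i}. \<Prod>j\<in>{1..d}. multichoose ((n(i := m)) l) ((E(i := e)) l j))
      = (\<Prod>l\<in>{1..d} - {i}. \<Prod>j\<in>{1..d}. multichoose (n l) (E l j))"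
    by (rule prod.cong) auto
  finally show ?thesis .
qed

lemma vertex_product_split:
  "i \<in> {1..d} \<Longrightarrow> vertex_product d n = int (max 1 (n i)) * vertex_product d (n(i := 0))"
  using vertex_product_update [of i d n "n i"] by simp

lemma multichoose_product_split:
  "i \<in> {1..d} \<Longrightarrow> multichoose_product d n E
     = (\<Prod>j\<in>{1..d}. multichoose (n i) (E i j)) * (\<Prod>l\<in>{1..d} - {i}. \<Prod>j\<in>{1..d}. multichoose (n l) (E l j))"
  using multichoose_product_update [of i d n "n i" E "E i"] by simp

lemma det_forest_matrix_update:
  assumes "i \<in> {1..d}"
  shows "det (forest_matrix d (n(i := m)) (E(i := e)))
       = (\<Sum>b<d. forest_entry (n(i := m)) (E(i := e)) i (Suc b) * cofactor (forest_matrix d n E) (i - 1) b)"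
proof -
  have "det (forest_matrix d (n(i := m)) (E(i := e)))
      = (\<Sum>b<d. forest_matrix d (n(i := m)) (E(i := e)) $$ (i - 1, b) * cofactor (forest_matrix d n E) (i - 1) b)"
    using assms
    by (intro det_replace_row forest_matrix_carrier) (auto simp: forest_matrix_index forest_entry_def)
  also have "\<dots> = (\<Sum>b<d. forest_entry (n(i := m)) (E(i := e)) i (Suc b)
                        * cofactor (forest_matrix d n E) (i - 1) b)"
    using assms by (intro sum.cong refl) (auto simp: forest_matrix_index)
  finally show ?thesis .
qed

lemma det_forest_matrix_remove_unique_vertex:
  assumes i: "i \<in> {1..d}" and ni: "n i = 1" and no_parent: "\<forall>l\<in>{1..d}. E l i = 0"
  shows "det (forest_matrix d (n(i := 0)) (E(i := e))) = det (forest_matrix d n E)"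
proof -
  let ?A = "forest_matrix d n E"
  have p: "i - 1 < d"
    using i by auto
  have "det (forest_matrix d (n(i := 0)) (E(i := e)))
      = (\<Sum>b<d. forest_entry (n(i := 0)) (E(i := e)) i (Suc b) * cofactor ?A (i - 1) b)"
    using i by (rule det_forest_matrix_update)
  also have "\<dots> = (\<Sum>a<d. ?A $$ (a, i - 1) * cofactor ?A a (i - 1))"
    using i ni no_parent by (intro sum.cong) (auto simp: forest_matrix_index forest_entry_def)
  also have "\<dots> = det ?A"
    by (rule laplace_expansion_column [OF forest_matrix_carrier p, symmetric])
  finally show ?thesis .
qed

lemma det_forest_matrix_remove_root:
  assumes i: "i \<in> {1..d}" and ni: "n i = Suc m" and m: "m \<noteq> 0" and c: "c \<in> child_counts d E i"
  shows "det (forest_matrix d (n(i := m)) (E(i := (\<lambda>j. E i j - c j))))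
       = (\<Sum>b<d. (forest_entry n E i (Suc b) + int (c (Suc b)) - of_bool (Suc b = i))
                 * cofactor (forest_matrix d n E) (i - 1) b)"
proof -
  have "forest_entry (n(i := m)) (E(i := (\<lambda>j. E i j - c j))) i (Suc b)
      = forest_entry n E i (Suc b) + int (c (Suc b)) - of_bool (Suc b = i)" if "b < d" for b
    using that ni m child_counts_le [OF c, of "Suc b"] by (auto simp: forest_entry_def of_nat_diff)
  then show ?thesis
    using i by (simp add: det_forest_matrix_update)
qed

lemma sum_det_forest_matrix_children:
  assumes i: "i \<in> {1..d}" and ni: "n i = Suc m" and m: "m \<noteq> 0"
  shows "int (Suc m) * (\<Sum>c\<in>child_counts d E i.
            det (forest_matrix d (n(i := m)) (E(i := (\<lambda>j. E i j - c j))))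
            * int (\<Prod>j\<in>{1..d}. multichoose m (E i j - c j)))
       = int m * int (\<Prod>j\<in>{1..d}. multichoose (Suc m) (E i j)) * det (forest_matrix d n E)"
proof -
  let ?A = "forest_matrix d n E"
  let ?p = "i - 1"
  define a where "a b = forest_entry n E i (Suc b)" for b
  define \<delta> where "\<delta> b = (of_bool (Suc b = i) :: int)" for b
  have p: "?p < d"
    using i by auto
  have det_child: "det (forest_matrix d (n(i := m)) (E(i := (\<lambda>j. E i j - c j))))
      = (\<Sum>b<d. (a b + int (c (Suc b)) - \<delta> b) * cofactor ?A ?p b)"
    if "c \<in> child_counts d E i" for c
    using det_forest_matrix_remove_root [where n = n, OF i ni m that] by (simp add: a_def \<delta>_def)
  have "int (Suc m) * (\<Sum>c\<in>child_counts d E i.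
            (\<Sum>b<d. (a b + int (c (Suc b)) - \<delta> b) * cofactor ?A ?p b)
            * int (\<Prod>j\<in>{1..d}. multichoose m (E i j - c j)))
      = (int (Suc m) - 1) * int (\<Prod>j\<in>{1..d}. multichoose (Suc m) (E i j))
          * (\<Sum>b<d. a b * cofactor ?A ?p b)"
  proof (rule sum_row_replacements)
    show "(\<Sum>c\<in>child_counts d E i. int (\<Prod>j\<in>{1..d}. multichoose m (E i j - c j)))
        = int (\<Prod>j\<in>{1..d}. multichoose (Suc m) (E i j))"
      by (simp only: sum_child_counts_multichoose flip: of_nat_sum)
    show "int (Suc m) * (\<Sum>c\<in>child_counts d E i. int (c (Suc b)) * int (\<Prod>j\<in>{1..d}. multichoose m (E i j - c j)))
        = int (E i (Suc b)) * int (\<Prod>j\<in>{1..d}. multichoose (Suc m) (E i j))"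
      if "b < d" for b
      using arg_cong [where f = int, OF sum_child_counts_weighted_multichoose [of "Suc b" d m E i]] that
      by (simp only: of_nat_mult of_nat_sum atLeastAtMost_iff) simp
    show "a b = \<delta> b * int (Suc m) - int (E i (Suc b))" if "b < d" for b
      using ni by (simp add: a_def \<delta>_def forest_entry_def)
  qed
  moreover have "(\<Sum>b<d. a b * cofactor ?A ?p b) = det ?A"
    unfolding laplace_expansion_row [OF forest_matrix_carrier p]
    using i by (intro sum.cong) (auto simp: forest_matrix_index a_def)
  ultimately show ?thesis
    by (simp add: det_child)
qed

text \<open>The rows of the types that occur sum to zero.\<close>

lemma det_forest_matrix_eq_0:
  assumes in_edges: "\<forall>j\<in>{1..d}. n j = (\<Sum>l\<in>{1..d}. E l j)"
    and absent: "\<forall>l\<in>{1..d}. \<forall>j\<in>{1..d}. n l = 0 \<longrightarrow> E l j = 0"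
    and q: "q \<in> {1..d}" "n q \<noteq> 0"
  shows "det (forest_matrix d n E) = 0"
proof -
  let ?A = "forest_matrix d n E"
  define v where "v = vec d (\<lambda>a. of_bool (n (Suc a) \<noteq> 0) :: int)"
  have "v $ (q - 1) = 1"
    using q by (auto simp: v_def)
  then have v: "v \<in> carrier_vec d" "v \<noteq> 0\<^sub>v d"
    using q by (auto simp: v_def)
  have "(transpose_mat ?A *\<^sub>v v) $ b = 0" if b: "b < d" for b
  proof -
    have "(transpose_mat ?A *\<^sub>v v) $ b
        = (\<Sum>l\<in>{1..d}. forest_entry n E l (Suc b) * of_bool (n l \<noteq> 0))"
      using b by (simp add: forest_matrix_def v_def scalar_prod_def atLeast0LessThan sum.atLeast1_atMost_eq)
    also have "\<dots> = (\<Sum>l\<in>{1..d}. of_bool (l = Suc b) * int (n l) - int (E l (Suc b)))"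
      using b absent by (intro sum.cong) (auto simp: forest_entry_def)
    also have "\<dots> = 0"
      using b in_edges by (simp add: sum_subtractf flip: of_nat_sum)
    finally show ?thesis .
  qed
  then have "transpose_mat ?A *\<^sub>v v = 0\<^sub>v d"
    by (intro eq_vecI) (auto simp: forest_matrix_def)
  then have "det (transpose_mat ?A) = 0"
    using v by (subst det_0_iff_vec_prod_zero [where n = d]) (auto simp: forest_matrix_def)
  then show ?thesis
    by (simp add: det_transpose [OF forest_matrix_carrier])
qed

lemma det_mult_multichoose_product_eq_0:
  assumes in_edges: "\<forall>j\<in>{1..d}. n j = (\<Sum>l\<in>{1..d}. E l j)" and q: "q \<in> {1..d}" "n q \<noteq> 0"
  shows "det (forest_matrix d n E) * int (multichoose_product d n E) = 0"
proof (cases "\<exists>l\<in>{1..d}. \<exists>j\<in>{1..d}. n l = 0 \<and> E l j \<noteq> 0")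
  case True
  then obtain l j where "l \<in> {1..d}" "j \<in> {1..d}" "multichoose (n l) (E l j) = 0"
    by (auto simp: multichoose_0_left)
  then have "multichoose_product d n E = 0"
    unfolding multichoose_product_def by (fastforce simp: prod_zero_iff)
  then show ?thesis
    by simp
next
  case False
  then have "det (forest_matrix d n E) = 0"
    by (intro det_forest_matrix_eq_0 [OF in_edges _ q]) blast
  then show ?thesis
    by simp
qed

section \<open>The counting identity\<close>

definition balanced :: "nat \<Rightarrow> nat list \<Rightarrow> (nat \<Rightarrow> nat) \<Rightarrow> (nat \<Rightarrow> nat \<Rightarrow> nat) \<Rightarrow> bool" where
  "balanced d \<tau> n E \<longleftrightarrow> (\<forall>j\<in>{1..d}. n j = count (mset \<tau>) j + (\<Sum>l\<in>{1..d}. E l j))"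

definition forest_count_formula ::
  "nat \<Rightarrow> nat list \<Rightarrow> (nat \<Rightarrow> nat) \<Rightarrow> (nat \<Rightarrow> nat \<Rightarrow> nat) \<Rightarrow> bool" where
  "forest_count_formula d \<tau> n E \<longleftrightarrow> finite (rooted_forests d \<tau> n E) \<and>
     int (card (rooted_forests d \<tau> n E)) * vertex_product d n
       = det (forest_matrix d n E) * int (multichoose_product d n E)"

lemma sum_fun_upd_column:
  fixes E :: "'a \<Rightarrow> 'b \<Rightarrow> 'c :: comm_monoid_add"
  assumes "finite A" "i \<in> A"
  shows "(\<Sum>l\<in>A. (E(i := e)) l j) + E i j = (\<Sum>l\<in>A. E l j) + e j"
proof -
  have "(\<Sum>l\<in>A. (E(i := e)) l j) = e j + (\<Sum>l\<in>A - {i}. (E(i := e)) l j)"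
    using assms by (simp add: sum.remove)
  also have "(\<Sum>l\<in>A - {i}. (E(i := e)) l j) = (\<Sum>l\<in>A - {i}. E l j)"
    by (rule sum.cong) auto
  moreover have "(\<Sum>l\<in>A. E l j) = E i j + (\<Sum>l\<in>A - {i}. E l j)"
    using assms by (simp add: sum.remove)
  ultimately show ?thesis
    by (simp add: ac_simps)
qed

lemma balanced_remaining:
  assumes i: "i \<in> {1..d}" and bal: "balanced d (i # \<tau>) n E" and c: "c \<in> child_counts d E i"
  shows "balanced d (type_word d c @ \<tau>) (n(i := n i - 1)) (E(i := (\<lambda>j. E i j - c j)))"
  unfolding balanced_def
proof
  fix j
  assume j: "j \<in> {1..d}"
  have "(\<Sum>l\<in>{1..d}. (E(i := (\<lambda>j. E i j - c j))) l j) + E i j = (\<Sum>l\<in>{1..d}. E l j) + (E i j - c j)"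
    using i by (intro sum_fun_upd_column) auto
  moreover have "c j \<le> E i j"
    using c j by (rule child_counts_le)
  moreover have "n j = of_bool (i = j) + count (mset \<tau>) j + (\<Sum>l\<in>{1..d}. E l j)"
    using bal j by (simp add: balanced_def)
  ultimately show "(n(i := n i - 1)) j
      = count (mset (type_word d c @ \<tau>)) j + (\<Sum>l\<in>{1..d}. (E(i := (\<lambda>j. E i j - c j))) l j)"
    using j by (auto simp: count_mset_type_word)
qed

lemma forest_count_formula_Nil:
  assumes bal: "balanced d [] n E"
  shows "forest_count_formula d [] n E"
proof -
  have in_edges: "\<forall>j\<in>{1..d}. n j = (\<Sum>l\<in>{1..d}. E l j)"
    using bal by (simp add: balanced_def)
  consider (no_vertices) "\<forall>l\<in>{1..d}. n l = 0" | (vertices) q where "q \<in> {1..d}" "n q \<noteq> 0"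
    by blast
  then show ?thesis
  proof cases
    case no_vertices
    then have E: "E l j = 0" if "l \<in> {1..d}" "j \<in> {1..d}" for l j
      using in_edges that by simp
    then have "rooted_forests d [] n E = {[]}"
      using no_vertices by (auto simp: rooted_forests_def)
    moreover have "forest_matrix d n E = 1\<^sub>m d"
      using no_vertices by (intro eq_matI) (auto simp: forest_matrix_def forest_entry_def)
    moreover have "vertex_product d n = 1"
    proof -
      have "{l\<in>{1..d}. n l \<noteq> 0} = {}"
        using no_vertices by auto
      then show ?thesis
        unfolding vertex_product_def by (simp only: prod.empty)
    qed
    moreover have "multichoose_product d n E = 1"
      using no_vertices E by (simp add: multichoose_product_def)
    ultimately show ?thesis
      by (simp add: forest_count_formula_def)
  next
    case vertices
    then have "rooted_forests d [] n E = {}"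
      by (auto simp: rooted_forests_def)
    moreover have "det (forest_matrix d n E) * int (multichoose_product d n E) = 0"
      using in_edges vertices by (rule det_mult_multichoose_product_eq_0)
    ultimately show ?thesis
      by (simp add: forest_count_formula_def)
  qed
qed

lemma forest_count_formula_remaining:
  assumes i: "i \<in> {1..d}" and ni: "n i = Suc m"
    and IH: "forest_count_formula d (type_word d c @ \<tau>) (n(i := n i - 1)) (E(i := (\<lambda>j. E i j - c j)))"
  shows "finite (remaining_forests d \<tau> n E i c)"
    and "int (card (remaining_forests d \<tau> n E i c)) * int (max 1 m) * vertex_product d (n(i := 0))
       = det (forest_matrix d (n(i := m)) (E(i := (\<lambda>j. E i j - c j))))
         * int (\<Prod>j\<in>{1..d}. multichoose m (E i j - c j))
         * int (\<Prod>l\<in>{1..d} - {i}. \<Prod>j\<in>{1..d}. multichoose (n l) (E l j))"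
  using IH vertex_product_update [OF i, of n m] multichoose_product_update [OF i, of n m E]
  by (simp_all add: forest_count_formula_def ni mult.assoc)

lemma forest_count_formula_Cons_unique:
  assumes i: "i \<in> {1..d}" and bal: "balanced d (i # \<tau>) n E" and ni: "n i = 1"
    and IH: "\<And>c. c \<in> child_counts d E i \<Longrightarrow>
      forest_count_formula d (type_word d c @ \<tau>) (n(i := n i - 1)) (E(i := (\<lambda>j. E i j - c j)))"
  shows "forest_count_formula d (i # \<tau>) n E"
proof -
  let ?F = "remaining_forests d \<tau> n E i"
  let ?Q = "vertex_product d (n(i := 0))"
  let ?G = "\<Prod>l\<in>{1..d} - {i}. \<Prod>j\<in>{1..d}. multichoose (n l) (E l j)"
  define cs where "cs = restrict (E i) {1..d}"
  have ni': "n i = Suc 0"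
    using ni by simp
  have cs: "cs \<in> child_counts d E i"
    by (simp add: cs_def child_counts_def)
  have fin: "finite (?F c)" if "c \<in> child_counts d E i" for c
    using forest_count_formula_remaining(1) [OF i ni' IH [OF that]] .
  have rem: "int (card (?F c)) * ?Q
      = det (forest_matrix d (n(i := 0)) (E(i := (\<lambda>j. E i j - c j)))) * of_bool (c = cs) * int ?G"
    if c: "c \<in> child_counts d E i" for c
    using forest_count_formula_remaining(2) [OF i ni' IH [OF c]] prod_multichoose_0_child_counts [OF c]
    by (simp add: cs_def del: of_nat_prod)
  have "card (?F c) = 0" if "c \<in> child_counts d E i - {cs}" for c
    using rem [of c] that vertex_product_pos [of d "n(i := 0)"] by simp
  then have "(\<Sum>c\<in>child_counts d E i. card (?F c)) = (\<Sum>c\<in>{cs}. card (?F c))"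
    using cs finite_child_counts by (intro sum.mono_neutral_right) auto
  then have card: "card (rooted_forests d (i # \<tau>) n E) = card (?F cs)"
    using card_rooted_forests_Cons(2) [of i d n E \<tau>] i ni fin by simp
  have "\<forall>l\<in>{1..d}. E l i = 0"
    using bal i ni by (simp add: balanced_def)
  then have det: "det (forest_matrix d (n(i := 0)) (E(i := (\<lambda>j. E i j - cs j))))
      = det (forest_matrix d n E)"
    by (rule det_forest_matrix_remove_unique_vertex [where n = n, OF i ni])
  have "vertex_product d n = ?Q"
    using vertex_product_split [OF i, of n] ni by simp
  then have "int (card (rooted_forests d (i # \<tau>) n E)) * vertex_product d n = int (card (?F cs)) * ?Q"
    by (simp only: card)
  also have "\<dots> = det (forest_matrix d n E) * int ?G"
    using rem [OF cs] det by simp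
  also have "?G = multichoose_product d n E"
    using multichoose_product_split [OF i, of n E] ni by (simp add: multichoose_def)
  finally show ?thesis
    using card_rooted_forests_Cons(1) [of i d n E \<tau>] i ni fin
    by (simp add: forest_count_formula_def)
qed

lemma forest_count_formula_Cons_multiple:
  assumes i: "i \<in> {1..d}" and ni: "n i = Suc m" and m: "m \<noteq> 0"
    and IH: "\<And>c. c \<in> child_counts d E i \<Longrightarrow>
      forest_count_formula d (type_word d c @ \<tau>) (n(i := n i - 1)) (E(i := (\<lambda>j. E i j - c j)))"
  shows "forest_count_formula d (i # \<tau>) n E"
proof -
  let ?F = "remaining_forests d \<tau> n E i"
  let ?A = "\<lambda>c. forest_matrix d (n(i := m)) (E(i := (\<lambda>j. E i j - c j)))"
  let ?R = "\<lambda>c. int (\<Prod>j\<in>{1..d}. multichoose m (E i j - c j))"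
  let ?Q = "vertex_product d (n(i := 0))"
  let ?G = "int (\<Prod>l\<in>{1..d} - {i}. \<Prod>j\<in>{1..d}. multichoose (n l) (E l j))"
  have fin: "finite (?F c)" if "c \<in> child_counts d E i" for c
    using forest_count_formula_remaining(1) [OF i ni IH [OF that]] .
  have rem: "int (card (?F c)) * int m * ?Q = det (?A c) * ?R c * ?G"
    if "c \<in> child_counts d E i" for c
    using forest_count_formula_remaining(2) [OF i ni IH [OF that]] m by simp
  have card: "int (card (rooted_forests d (i # \<tau>) n E)) = (\<Sum>c\<in>child_counts d E i. int (card (?F c)))"
    using card_rooted_forests_Cons(2) [of i d n E \<tau>] i ni fin by simp
  have "int m * (int (card (rooted_forests d (i # \<tau>) n E)) * vertex_product d n)
      = int (Suc m) * (\<Sum>c\<in>child_counts d E i. int (card (?F c)) * int m * ?Q)"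
    using vertex_product_split [OF i, of n] ni
    by (simp add: card sum_distrib_left sum_distrib_right algebra_simps)
  also have "\<dots> = ?G * (int (Suc m) * (\<Sum>c\<in>child_counts d E i. det (?A c) * ?R c))"
    using rem by (simp add: sum_distrib_left algebra_simps)
  also have "\<dots> = int m * (det (forest_matrix d n E) * int (multichoose_product d n E))"
    using sum_det_forest_matrix_children [where n = n, OF i ni m] multichoose_product_split [OF i, of n E] ni
    by (simp add: algebra_simps)
  finally show ?thesis
    using card_rooted_forests_Cons(1) [of i d n E \<tau>] i ni fin m
    by (simp add: forest_count_formula_def)
qed

lemma forest_count_formula_Cons:
  assumes i: "i \<in> {1..d}" and bal: "balanced d (i # \<tau>) n E"
    and IH: "\<And>c. c \<in> child_counts d E i \<Longrightarrow>
      forest_count_formula d (type_word d c @ \<tau>) (n(i := n i - 1)) (E(i := (\<lambda>j. E i j - c j)))"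
  shows "forest_count_formula d (i # \<tau>) n E"
proof -
  obtain m where ni: "n i = Suc m"
    using bal i by (auto simp: balanced_def)
  show ?thesis
  proof (cases "m = 0")
    case True
    with i bal ni IH show ?thesis
      by (intro forest_count_formula_Cons_unique) simp_all
  next
    case False
    from i ni this IH show ?thesis
      by (rule forest_count_formula_Cons_multiple)
  qed
qed

lemma forest_count_formula_if_balanced:
  assumes "set \<tau> \<subseteq> {1..d}" and "balanced d \<tau> n E"
  shows "forest_count_formula d \<tau> n E"
  using assms
proof (induction "\<Sum>l\<in>{1..d}. n l" arbitrary: \<tau> n E rule: less_induct)
  case less
  show ?case
  proof (cases \<tau>)
    case Nil
    then show ?thesis
      using less.prems(2) by (simp add: forest_count_formula_Nil)
  next
    case (Cons i \<tau>')
    have i: "i \<in> {1..d}"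
      using less.prems(1) Cons by simp
    have ni: "n i \<ge> 1"
      using less.prems(2) i Cons by (simp add: balanced_def)
    show ?thesis
      unfolding Cons
    proof (rule forest_count_formula_Cons [OF i])
      show "balanced d (i # \<tau>') n E"
        using less.prems(2) Cons by simp
      fix c
      assume c: "c \<in> child_counts d E i"
      have "(\<Sum>l\<in>{1..d}. (n(i := n i - 1)) l) < (\<Sum>l\<in>{1..d}. n l)"
        using i ni by (intro sum_strict_mono_ex1) auto
      moreover have "set (type_word d c @ \<tau>') \<subseteq> {1..d}"
        using less.prems(1) Cons set_type_word [of d c] by auto
      moreover have "balanced d (type_word d c @ \<tau>') (n(i := n i - 1)) (E(i := (\<lambda>j. E i j - c j)))"
        using i \<open>balanced d (i # \<tau>') n E\<close> c by (rule balanced_remaining)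
      ultimately show "forest_count_formula d (type_word d c @ \<tau>') (n(i := n i - 1))
          (E(i := (\<lambda>j. E i j - c j)))"
        by (rule less.hyps)
    qed
  qed
qed

section \<open>The forests of the theorem\<close>

text \<open>The paper's \<open>k'\<^sub>i\<^sub>j\<close>, the number of type \<open>j\<close> vertices with a parent of type \<open>i\<close>.\<close>

definition edge_counts :: "(nat \<Rightarrow> int) \<Rightarrow> (nat \<Rightarrow> nat \<Rightarrow> int) \<Rightarrow> nat \<Rightarrow> nat \<Rightarrow> nat" where
  "edge_counts n k i j = nat (if i = j then n i + k i i else k i j)"

lemma int_edge_counts:
  assumes "i \<noteq> j \<Longrightarrow> k i j \<ge> 0" and "n i \<ge> - k i i"
  shows "int (edge_counts n k i j) = (if i = j then n i + k i i else k i j)"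
  using assms by (cases "i = j") (simp_all add: edge_counts_def)

lemma sum_edge_counts_column:
  assumes j: "j \<in> {1..d}" and k: "\<forall>i\<in>{1..d}. i \<noteq> j \<longrightarrow> k i j \<ge> 0"
    and kdiag: "- k j j = r j + (\<Sum>i\<in>{1..d} - {j}. k i j)" and n: "n j \<ge> - k j j"
  shows "(\<Sum>l\<in>{1..d}. int (edge_counts n k l j)) = n j - r j"
proof -
  have "(\<Sum>l\<in>{1..d}. int (edge_counts n k l j))
      = int (edge_counts n k j j) + (\<Sum>l\<in>{1..d} - {j}. int (edge_counts n k l j))"
    using j by (simp add: sum.remove)
  also have "(\<Sum>l\<in>{1..d} - {j}. int (edge_counts n k l j)) = (\<Sum>l\<in>{1..d} - {j}. k l j)"
    using k by (intro sum.cong) (auto simp: edge_counts_def)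
  finally show ?thesis
    using kdiag n by (simp add: edge_counts_def)
qed

lemma fedges_diag_forest_class:
  assumes F: "F \<in> forest_class d n r k" and j: "j \<in> {1..d}"
    and kdiag: "- k j j = r j + (\<Sum>i\<in>{1..d} - {j}. k i j)"
  shows "int (fedges j j F) = n j + k j j"
proof -
  from F have wf: "\<forall>T\<in>set F. wf_tree d T"
    and fv: "int (fverts j F) = n j" and fr: "int (froots j F) = r j"
    and fe: "\<forall>i\<in>{1..d}. i \<noteq> j \<longrightarrow> int (fedges i j F) = k i j"
    using j by (auto simp: forest_class_def plane_forest_def)
  have "(\<Sum>l\<in>{1..d}. int (fedges l j F)) = int (fedges j j F) + (\<Sum>l\<in>{1..d} - {j}. k l j)"
    using j fe by (simp add: sum.remove)
  moreover have "int (fverts j F) = int (froots j F) + (\<Sum>l\<in>{1..d}. int (fedges l j F))"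
    using fverts_eq_roots_plus_in_edges [OF wf, of j] by (simp add: froots_eq_count)
  ultimately show ?thesis
    using fv fr kdiag by simp
qed

lemma forest_class_eq_rooted_forests:
  assumes r: "\<forall>i\<in>{1..d}. r i \<ge> 0"
    and k: "\<forall>i\<in>{1..d}. \<forall>j\<in>{1..d}. i \<noteq> j \<longrightarrow> k i j \<ge> 0"
    and kdiag: "\<forall>j\<in>{1..d}. - k j j = r j + (\<Sum>i\<in>{1..d} - {j}. k i j)"
    and n: "\<forall>i\<in>{1..d}. n i \<ge> - k i i" and n_pos: "\<forall>i\<in>{1..d}. n i > 0"
  shows "forest_class d n r k
       = rooted_forests d (type_word d (\<lambda>i. nat (r i))) (\<lambda>i. nat (n i)) (edge_counts n k)"
proof (intro Set.set_eqI iffI)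
  fix F
  assume F: "F \<in> forest_class d n r k"
  then have wf: "\<forall>T\<in>set F. wf_tree d T" and sorted: "sorted (map ptype F)"
    and fv: "\<forall>i\<in>{1..d}. int (fverts i F) = n i"
    and fr: "\<forall>i\<in>{1..d}. int (froots i F) = r i"
    and fe: "\<forall>i\<in>{1..d}. \<forall>j\<in>{1..d}. i \<noteq> j \<longrightarrow> int (fedges i j F) = k i j"
    by (auto simp: forest_class_def plane_forest_def)
  have types: "map ptype F = type_word d (\<lambda>i. nat (r i))"
    using sorted set_map_ptype_subset [OF wf] fr
    by (intro sorted_eq_type_word) (auto simp: froots_eq_count)
  have "int (fedges i j F) = int (edge_counts n k i j)" if i: "i \<in> {1..d}" and j: "j \<in> {1..d}" for i j
  proof (cases "i = j")
    case True
    then show ?thesis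
      using fedges_diag_forest_class [OF F j] kdiag j n by (simp add: edge_counts_def)
  next
    case False
    then show ?thesis
      using fe k i j by (simp add: edge_counts_def)
  qed
  then show "F \<in> rooted_forests d (type_word d (\<lambda>i. nat (r i))) (\<lambda>i. nat (n i)) (edge_counts n k)"
    using types wf fv by (auto simp: rooted_forests_def)
next
  fix F
  assume "F \<in> rooted_forests d (type_word d (\<lambda>i. nat (r i))) (\<lambda>i. nat (n i)) (edge_counts n k)"
  then have types: "map ptype F = type_word d (\<lambda>i. nat (r i))" and wf: "\<forall>T\<in>set F. wf_tree d T"
    and fv: "\<forall>i\<in>{1..d}. fverts i F = nat (n i)"
    and fe: "\<forall>i\<in>{1..d}. \<forall>j\<in>{1..d}. fedges i j F = edge_counts n k i j"
    by (auto simp: rooted_forests_def)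
  have "froots i F = nat (r i)" if "i \<in> {1..d}" for i
    unfolding froots_eq_count types using that by (simp add: count_mset_type_word)
  then show "F \<in> forest_class d n r k"
    using types wf fv fe sorted_type_word r n_pos k
    by (auto simp: forest_class_def plane_forest_def edge_counts_def)
qed

lemma balanced_edge_counts:
  assumes r: "\<forall>i\<in>{1..d}. r i \<ge> 0"
    and k: "\<forall>i\<in>{1..d}. \<forall>j\<in>{1..d}. i \<noteq> j \<longrightarrow> k i j \<ge> 0"
    and kdiag: "\<forall>j\<in>{1..d}. - k j j = r j + (\<Sum>i\<in>{1..d} - {j}. k i j)"
    and n: "\<forall>i\<in>{1..d}. n i \<ge> - k i i" and n_pos: "\<forall>i\<in>{1..d}. n i > 0"
  shows "balanced d (type_word d (\<lambda>i. nat (r i))) (\<lambda>i. nat (n i)) (edge_counts n k)"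
  unfolding balanced_def
proof
  fix j
  assume j: "j \<in> {1..d}"
  have "(\<Sum>l\<in>{1..d}. int (edge_counts n k l j)) = n j - r j"
    using j k kdiag n by (intro sum_edge_counts_column) auto
  moreover have "r j \<ge> 0" "n j > 0"
    using j r n_pos by auto
  ultimately have "int (nat (n j)) = int (nat (r j) + (\<Sum>l\<in>{1..d}. edge_counts n k l j))"
    by simp
  then show "nat (n j) = count (mset (type_word d (\<lambda>i. nat (r i)))) j + (\<Sum>l\<in>{1..d}. edge_counts n k l j)"
    using j by (simp only: of_nat_eq_iff count_mset_type_word if_True)
qed

lemma forest_matrix_edge_counts:
  assumes k: "\<forall>i\<in>{1..d}. \<forall>j\<in>{1..d}. i \<noteq> j \<longrightarrow> k i j \<ge> 0"
    and n: "\<forall>i\<in>{1..d}. n i \<ge> - k i i" and n_pos: "\<forall>i\<in>{1..d}. n i > 0"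
  shows "forest_matrix d (\<lambda>i. nat (n i)) (edge_counts n k) = mat d d (\<lambda>(i, j). - k (i + 1) (j + 1))"
proof (rule eq_matI)
  fix a b
  assume "a < dim_row (mat d d (\<lambda>(i, j). - k (i + 1) (j + 1)))"
    and "b < dim_col (mat d d (\<lambda>(i, j). - k (i + 1) (j + 1)))"
  then have a: "Suc a \<in> {1..d}" and b: "Suc b \<in> {1..d}"
    by auto
  show "forest_matrix d (\<lambda>i. nat (n i)) (edge_counts n k) $$ (a, b) = mat d d (\<lambda>(i, j). - k (i + 1) (j + 1)) $$ (a, b)"
  proof -
    have "n (Suc a) > 0" "n (Suc a) \<ge> - k (Suc a) (Suc a)" "a \<noteq> b \<Longrightarrow> k (Suc a) (Suc b) \<ge> 0"
      using a b n_pos n k by auto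
    then show ?thesis
      using a b int_edge_counts [of "Suc a" "Suc b" k n] by (auto simp: forest_matrix_def forest_entry_def)
  qed
qed (simp_all add: forest_matrix_def)

lemma vertex_product_nat:
  assumes "\<forall>i\<in>{1..d}. n i > 0"
  shows "vertex_product d (\<lambda>i. nat (n i)) = (\<Prod>i=1..d. n i)"
proof -
  have "{l\<in>{1..d}. nat (n l) \<noteq> 0} = {1..d}"
    using assms by auto
  then show ?thesis
    unfolding vertex_product_def using assms by (intro prod.cong) (auto intro: less_imp_le)
qed

lemma multichoose_product_edge_counts:
  assumes k: "\<forall>i\<in>{1..d}. \<forall>j\<in>{1..d}. i \<noteq> j \<longrightarrow> k i j \<ge> 0"
    and n: "\<forall>i\<in>{1..d}. n i \<ge> - k i i" and n_pos: "\<forall>i\<in>{1..d}. n i > 0"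
  shows "real (multichoose_product d (\<lambda>i. nat (n i)) (edge_counts n k))
       = (\<Prod>i=1..d. \<Prod>j=1..d.
           (let kk = (if i = j then n i + k i i else k i j)
            in real (nat (n i + kk - 1) choose nat kk)))"
  unfolding multichoose_product_def of_nat_prod
proof (intro prod.cong refl)
  fix i j
  assume i: "i \<in> {1..d}" and j: "j \<in> {1..d}"
  define kk where "kk = (if i = j then n i + k i i else k i j)"
  have "n i \<ge> - k i i" "i \<noteq> j \<Longrightarrow> k i j \<ge> 0"
    using i j k n by auto
  then have "kk \<ge> 0"
    by (auto simp: kk_def)
  moreover have "n i > 0"
    using i n_pos by auto
  ultimately have "nat (n i) + nat kk - 1 = nat (n i + kk - 1)"
    by auto
  then show "real (multichoose (nat (n i)) (edge_counts n k i j))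
      = (let kk = (if i = j then n i + k i i else k i j) in real (nat (n i + kk - 1) choose nat kk))"
    by (simp add: multichoose_def edge_counts_def kk_def [symmetric])
qed

theorem theorem5p1:
  fixes d :: nat and r n :: "nat \<Rightarrow> int" and k :: "nat \<Rightarrow> nat \<Rightarrow> int"
  assumes "d \<ge> 2"
    and "\<forall>i\<in>{1..d}. r i \<ge> 0"
    and "(\<Sum>i=1..d. r i) \<ge> 1"
    and "\<forall>i\<in>{1..d}. \<forall>j\<in>{1..d}. i \<noteq> j \<longrightarrow> k i j \<ge> 0"
    and "\<forall>j\<in>{1..d}. - k j j = r j + (\<Sum>i\<in>{1..d} - {j}. k i j)"
    and "\<forall>i\<in>{1..d}. n i \<ge> - k i i"
    and "\<forall>i\<in>{1..d}. - k i i > 0"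
  shows "real (card (forest_class d n r k)) =
    real_of_int (det (mat d d (\<lambda>(i, j). - k (i + 1) (j + 1))))
      / (\<Prod>i=1..d. real_of_int (n i))
      * (\<Prod>i=1..d. \<Prod>j=1..d.
           (let kk = (if i = j then n i + k i i else k i j)
            in real (nat (n i + kk - 1) choose nat kk)))"
proof -
  note r = assms(2) and k = assms(4) and kdiag = assms(5) and n = assms(6)
  have n_pos: "\<forall>i\<in>{1..d}. n i > 0"
    using assms(6,7) by fastforce
  let ?\<tau> = "type_word d (\<lambda>i. nat (r i))" and ?n = "\<lambda>i. nat (n i)" and ?E = "edge_counts n k"
  have "forest_count_formula d ?\<tau> ?n ?E"
    using set_type_word balanced_edge_counts [OF r k kdiag n n_pos] by (rule forest_count_formula_if_balanced)
  then have "int (card (forest_class d n r k)) * (\<Prod>i=1..d. n i)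
      = det (mat d d (\<lambda>(i, j). - k (i + 1) (j + 1))) * int (multichoose_product d ?n ?E)"
    by (simp add: forest_count_formula_def forest_class_eq_rooted_forests [OF r k kdiag n n_pos]
        forest_matrix_edge_counts [OF k n n_pos] vertex_product_nat [OF n_pos])
  then have "real_of_int (int (card (forest_class d n r k)) * (\<Prod>i=1..d. n i))
      = real_of_int (det (mat d d (\<lambda>(i, j). - k (i + 1) (j + 1))) * int (multichoose_product d ?n ?E))"
    by (rule arg_cong)
  then have "real (card (forest_class d n r k)) * (\<Prod>i=1..d. real_of_int (n i))
      = real_of_int (det (mat d d (\<lambda>(i, j). - k (i + 1) (j + 1)))) * real (multichoose_product d ?n ?E)"
    by (simp only: of_int_mult of_int_of_nat_eq of_int_prod)
  moreover have "(\<Prod>i=1..d. real_of_int (n i)) \<noteq> 0"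
    using n_pos by (auto simp: prod_zero_iff dest: less_imp_neq)
  ultimately show ?thesis
    unfolding multichoose_product_edge_counts [OF k n n_pos, symmetric]
    by (simp add: eq_divide_eq)
qed

end
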